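(* Let $G$ be a nice graph with no two adjacent vertices of the same degree. If $G$ has an interval coloring, then $\chi'_{qm\Sigma}(G)=2$.
   Context: All graphs are simple and finite. A $k$-edge-coloring of $G$ is any map $c:E(G)\to\{1,\dots,k\}$. An interval coloring of $G$ is a $k$-edge-coloring (for some $k$) in which the colors of the edges incident to each vertex are pairwise distinct and form an interval of consecutive integers. A $k$-edge-coloring $c$ induces $\sigma_c(v)=\sum_{u\in N(v)}c(vu)$; it is neighbor sum distinguishing (NSD) if $\sigma_c(u)\ne\sigma_c(v)$ for every edge $uv$, and quasi-majority if every vertex $v$ is incident to at most $\lceil d(v)/2\rceil$ edges of each single color. $\chi'_{qm\Sigma}(G)$ denotes the least $k$ such that $G$ has a $k$-edge-coloring that is both quasi-majority and NSD. A graph is nice if it has no connected component isomorphic to $K_2$. *)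

theory Defs
  imports Main
begin

definition simple_graph :: "'a set \<Rightarrow> 'a set set \<Rightarrow> bool" where
  "simple_graph V E \<longleftrightarrow> finite V \<and>
     (\<forall>e\<in>E. \<exists>u v. e = {u, v} \<and> u \<noteq> v \<and> u \<in> V \<and> v \<in> V)"

definition nbrs :: "'a set set \<Rightarrow> 'a \<Rightarrow> 'a set" where
  "nbrs E v = {u. {v, u} \<in> E}"

definition degree :: "'a set set \<Rightarrow> 'a \<Rightarrow> nat" where
  "degree E v = card (nbrs E v)"

definition incident :: "'a set set \<Rightarrow> 'a \<Rightarrow> 'a set set" where
  "incident E v = {e \<in> E. v \<in> e}"

text \<open>Nice: no connected component isomorphic to K2, i.e. no edge uv whose
  endpoints have no other neighbours (then {u,v} would be a K2 component).\<close>
definition nice :: "'a set set \<Rightarrow> bool" where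
  "nice E \<longleftrightarrow> \<not> (\<exists>u v. {u, v} \<in> E \<and> nbrs E u = {v} \<and> nbrs E v = {u})"

definition edge_coloring :: "'a set set \<Rightarrow> nat \<Rightarrow> ('a set \<Rightarrow> nat) \<Rightarrow> bool" where
  "edge_coloring E k c \<longleftrightarrow> (\<forall>e\<in>E. c e \<in> {1..k})"

definition interval_coloring :: "'a set \<Rightarrow> 'a set set \<Rightarrow> ('a set \<Rightarrow> nat) \<Rightarrow> bool" where
  "interval_coloring V E c \<longleftrightarrow> (\<exists>k. edge_coloring E k c) \<and>
     (\<forall>v\<in>V. inj_on c (incident E v) \<and> (\<exists>a b. c ` incident E v = {a..b}))"

definition sigma :: "'a set set \<Rightarrow> ('a set \<Rightarrow> nat) \<Rightarrow> 'a \<Rightarrow> nat" where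
  "sigma E c v = (\<Sum>u\<in>nbrs E v. c {v, u})"

definition nsd :: "'a set set \<Rightarrow> ('a set \<Rightarrow> nat) \<Rightarrow> bool" where
  "nsd E c \<longleftrightarrow> (\<forall>u v. {u, v} \<in> E \<longrightarrow> sigma E c u \<noteq> sigma E c v)"

text \<open>Quasi-majority: at most ceil(d(v)/2) = (d(v)+1) div 2 edges of each colour at v.\<close>
definition quasi_majority :: "'a set \<Rightarrow> 'a set set \<Rightarrow> ('a set \<Rightarrow> nat) \<Rightarrow> bool" where
  "quasi_majority V E c \<longleftrightarrow>
     (\<forall>v\<in>V. \<forall>i. card {e \<in> incident E v. c e = i} \<le> (degree E v + 1) div 2)"

definition chi_qm_sigma :: "'a set \<Rightarrow> 'a set set \<Rightarrow> nat" where
  "chi_qm_sigma V E = (LEAST k. \<exists>c. edge_coloring E k c \<and> quasi_majority V E c \<and> nsd E c)"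

end

theory Submission
  imports Defs
begin

text \<open>Recolour each edge by the parity of its colour in an interval colouring: even colours
  become 2 and odd colours become 1. At a vertex v the colours form an interval of d(v)
  consecutive integers, so there are \<lfloor>d(v)/2\<rfloor> or \<lceil>d(v)/2\<rceil> even ones;
  hence the new colouring is quasi-majority and \<sigma>(v) = d(v) + e(v) with
  e(v) \<in> {\<lfloor>d(v)/2\<rfloor>, \<lceil>d(v)/2\<rceil>}. The map d \<mapsto> d + e is injective, so adjacent
  vertices, having distinct degrees, get distinct sums. One colour is never enough, because
  distinct adjacent degrees force a vertex of degree at least 2.\<close>

lemma card_even_atLeastLessThan:
  "card {x \<in> {a..<a + n}. even (x::nat)} = (if even a then (n + 1) div 2 else n div 2)"
proof (induction n)
  case 0
  then show ?case by simp
next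
  case (Suc n)
  have "{x \<in> {a..<a + Suc n}. even x} =
      (if even (a + n) then insert (a + n) {x \<in> {a..<a + n}. even x} else {x \<in> {a..<a + n}. even x})"
    by (auto simp: less_Suc_eq)
  then show ?case
    using Suc by (cases "even (a + n)") auto
qed

lemma card_even_image_interval:
  fixes c :: "'b \<Rightarrow> nat"
  assumes "finite I" "inj_on c I" "c ` I = {a..b}"
  shows "card {e \<in> I. even (c e)} \<in> {card I div 2, (card I + 1) div 2}"
proof -
  have "card I = card {a..b}"
    using assms(2,3) by (metis card_image)
  then have interval: "{a..b} = {a..<a + card I}"
    by auto
  have "card {e \<in> I. even (c e)} = card (c ` {e \<in> I. even (c e)})"
    using assms(2) by (simp add: card_image inj_on_subset)
  also have "c ` {e \<in> I. even (c e)} = {x \<in> {a..<a + card I}. even x}"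
    using assms(3) interval by auto
  finally show ?thesis
    unfolding card_even_atLeastLessThan by simp
qed

text \<open>m + p is \<lfloor>3m/2\<rfloor> or \<lceil>3m/2\<rceil>, and these ranges are disjoint for distinct m.\<close>
lemma add_half_eq_imp_eq:
  fixes m n p q :: nat
  assumes "p \<in> {m div 2, (m + 1) div 2}" "q \<in> {n div 2, (n + 1) div 2}" "m + p = n + q"
  shows "m = n"
  using assms by auto

lemma simple_graph_edge_endpoints:
  assumes "simple_graph V E" "{u, v} \<in> E"
  shows "u \<in> V" "v \<in> V"
  using assms unfolding simple_graph_def by (fastforce simp: doubleton_eq_iff)+

lemma simple_graph_finite_nbrs:
  assumes "simple_graph V E"
  shows "finite (nbrs E v)"
proof (rule finite_subset)
  show "nbrs E v \<subseteq> V"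
    using simple_graph_edge_endpoints[OF assms] unfolding nbrs_def by blast
  show "finite V"
    using assms unfolding simple_graph_def by blast
qed

lemma incident_eq_image_nbrs:
  assumes "simple_graph V E"
  shows "incident E v = (\<lambda>u. {v, u}) ` nbrs E v"
proof
  show "incident E v \<subseteq> (\<lambda>u. {v, u}) ` nbrs E v"
    using assms unfolding simple_graph_def incident_def nbrs_def
    by (fastforce simp: insert_commute)
  show "(\<lambda>u. {v, u}) ` nbrs E v \<subseteq> incident E v"
    unfolding nbrs_def incident_def by auto
qed

lemma inj_doubleton: "inj (\<lambda>u. {v, u})"
  by (rule injI) (auto simp: doubleton_eq_iff)

lemma finite_incident:
  assumes "simple_graph V E"
  shows "finite (incident E v)"
  using simple_graph_finite_nbrs[OF assms] by (simp add: incident_eq_image_nbrs[OF assms])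

lemma degree_eq_card_incident:
  assumes "simple_graph V E"
  shows "degree E v = card (incident E v)"
  unfolding degree_def incident_eq_image_nbrs[OF assms]
  by (simp add: card_image inj_on_subset[OF inj_doubleton])

lemma sigma_eq_sum_incident:
  assumes "simple_graph V E"
  shows "sigma E c v = (\<Sum>e\<in>incident E v. c e)"
  unfolding sigma_def incident_eq_image_nbrs[OF assms]
  by (simp add: sum.reindex inj_on_subset[OF inj_doubleton])

lemma interval_coloring_card_even:
  assumes "simple_graph V E" "interval_coloring V E c" "v \<in> V"
  shows "card {e \<in> incident E v. even (c e)} \<in> {degree E v div 2, (degree E v + 1) div 2}"
proof -
  obtain a b where "inj_on c (incident E v)" "c ` incident E v = {a..b}"
    using assms(2,3) unfolding interval_coloring_def by blast
  with finite_incident[OF assms(1)] show ?thesis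
    unfolding degree_eq_card_incident[OF assms(1)] by (rule card_even_image_interval)
qed

definition parity_coloring :: "('b \<Rightarrow> nat) \<Rightarrow> 'b \<Rightarrow> nat" where
  "parity_coloring c e = (if even (c e) then 2 else 1)"

lemma edge_coloring_parity_coloring: "edge_coloring E 2 (parity_coloring c)"
  unfolding edge_coloring_def parity_coloring_def by auto

lemma sigma_parity_coloring:
  assumes "simple_graph V E"
  shows "sigma E (parity_coloring c) v = degree E v + card {e \<in> incident E v. even (c e)}"
proof -
  have "parity_coloring c e = 1 + of_bool (even (c e))" for e
    unfolding parity_coloring_def by simp
  then have "sigma E (parity_coloring c) v = card (incident E v) + card (incident E v \<inter> {e. even (c e)})"
    using finite_incident[OF assms]
    by (simp add: sigma_eq_sum_incident[OF assms] sum_Suc)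
  moreover have "incident E v \<inter> {e. even (c e)} = {e \<in> incident E v. even (c e)}"
    by blast
  ultimately show ?thesis
    by (simp add: degree_eq_card_incident[OF assms])
qed

lemma quasi_majority_parity_coloring:
  assumes "simple_graph V E" "interval_coloring V E c"
  shows "quasi_majority V E (parity_coloring c)"
  unfolding quasi_majority_def
proof (intro ballI allI)
  fix v i
  assume "v \<in> V"
  let ?I = "incident E v"
  have evens: "card {e \<in> ?I. even (c e)} \<in> {degree E v div 2, (degree E v + 1) div 2}"
    using interval_coloring_card_even[OF assms \<open>v \<in> V\<close>] .
  have "{e \<in> ?I. odd (c e)} = ?I - {e \<in> ?I. even (c e)}"
    by blast
  then have odds: "card {e \<in> ?I. odd (c e)} = degree E v - card {e \<in> ?I. even (c e)}"
    by (simp add: card_Diff_subset finite_incident[OF assms(1)] degree_eq_card_incident[OF assms(1)])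
  have "{e \<in> ?I. parity_coloring c e = i} \<subseteq>
      (if i = 2 then {e \<in> ?I. even (c e)} else {e \<in> ?I. odd (c e)})"
    unfolding parity_coloring_def by auto
  then have "card {e \<in> ?I. parity_coloring c e = i} \<le>
      (if i = 2 then card {e \<in> ?I. even (c e)} else card {e \<in> ?I. odd (c e)})"
    using finite_incident[OF assms(1)] by (auto intro: card_mono split: if_splits)
  then show "card {e \<in> ?I. parity_coloring c e = i} \<le> (degree E v + 1) div 2"
    using evens odds by (auto split: if_splits)
qed

lemma nsd_parity_coloring:
  assumes "simple_graph V E" "interval_coloring V E c"
    and "\<forall>u v. {u, v} \<in> E \<longrightarrow> degree E u \<noteq> degree E v"
  shows "nsd E (parity_coloring c)"
  unfolding nsd_def
proof (intro allI impI)
  fix u v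
  assume uv: "{u, v} \<in> E"
  have "degree E u \<noteq> degree E v"
    using assms(3) uv by blast
  then show "sigma E (parity_coloring c) u \<noteq> sigma E (parity_coloring c) v"
    unfolding sigma_parity_coloring[OF assms(1)]
    using add_half_eq_imp_eq
      interval_coloring_card_even[OF assms(1,2) simple_graph_edge_endpoints(1)[OF assms(1) uv]]
      interval_coloring_card_even[OF assms(1,2) simple_graph_edge_endpoints(2)[OF assms(1) uv]]
    by blast
qed

lemma obtain_vertex_degree_ge_2:
  assumes "simple_graph V E" "E \<noteq> {}"
    and "\<forall>u v. {u, v} \<in> E \<longrightarrow> degree E u \<noteq> degree E v"
  obtains w where "w \<in> V" "2 \<le> degree E w"
proof -
  obtain e where "e \<in> E"
    using assms(2) by blast
  then obtain u v where uv: "{u, v} \<in> E"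
    using assms(1) unfolding simple_graph_def by metis
  have "u \<in> nbrs E v" "v \<in> nbrs E u"
    using uv unfolding nbrs_def by (simp_all add: insert_commute)
  then have "0 < degree E u" "0 < degree E v"
    unfolding degree_def using simple_graph_finite_nbrs[OF assms(1)] card_gt_0_iff by blast+
  moreover have "degree E u \<noteq> degree E v"
    using assms(3) uv by blast
  ultimately have "2 \<le> degree E u \<or> 2 \<le> degree E v"
    by linarith
  with that simple_graph_edge_endpoints[OF assms(1) uv] show thesis
    by blast
qed

lemma quasi_majority_colors_ge_2:
  assumes "simple_graph V E" "w \<in> V" "2 \<le> degree E w"
    and "edge_coloring E k c" "quasi_majority V E c"
  shows "2 \<le> k"
proof (rule ccontr)
  assume "\<not> 2 \<le> k"
  then have "{e \<in> incident E w. c e = 1} = incident E w"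
    using assms(4) unfolding edge_coloring_def incident_def by auto
  then have "degree E w \<le> (degree E w + 1) div 2"
    using assms(2,5) unfolding quasi_majority_def degree_eq_card_incident[OF assms(1)] by metis
  with assms(3) show False
    by linarith
qed

theorem mainTheorem17:
  fixes V :: "'a set" and E :: "'a set set"
  assumes "simple_graph V E"
    and "E \<noteq> {}"
    and "nice E"
    and "\<forall>u v. {u, v} \<in> E \<longrightarrow> degree E u \<noteq> degree E v"
    and "\<exists>c. interval_coloring V E c"
  shows "chi_qm_sigma V E = 2"
proof -
  obtain c where c: "interval_coloring V E c"
    using assms(5) by blast
  obtain w where w: "w \<in> V" "2 \<le> degree E w"
    using obtain_vertex_degree_ge_2[OF assms(1,2,4)] .
  show ?thesis
    unfolding chi_qm_sigma_def
  proof (rule Least_equality)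
    show "\<exists>c'. edge_coloring E 2 c' \<and> quasi_majority V E c' \<and> nsd E c'"
      using edge_coloring_parity_coloring quasi_majority_parity_coloring[OF assms(1) c]
        nsd_parity_coloring[OF assms(1) c assms(4)] by blast
    show "2 \<le> k" if "\<exists>c'. edge_coloring E k c' \<and> quasi_majority V E c' \<and> nsd E c'" for k
      using that quasi_majority_colors_ge_2[OF assms(1) w] by blast
  qed
qed

end
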